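(* Consider the adaptive LP decoding algorithm described in the context, run on a binary linear code with parity-check matrix $H$ and log-likelihood vector $\underline\gamma\in\mathbb{R}^n$ with $\gamma_i\neq 0$ for all $i$. If at some iteration no cut is found at the current solution $\underline x$ (Step 3 finds no violated parity-check constraint), then $\underline x$ is an optimal solution of the LP decoding problem $\min\{\underline\gamma^T\underline x:\underline x\in\mathscr P\}$, where $\mathscr P$ is the fundamental polytope.
   Context: Let $H$ be an $m\times n$ binary parity-check matrix; for row $j$, $N(j)=\{i: H_{ji}=1\}$. The fundamental polytope $\mathscr P$ is the set of $\underline x\in\mathbb R^n$ with $0\le x_i\le 1$ for all $i$ and, for each $j=1,\dots,m$ and each odd-sized $V\subseteq N(j)$, $\sum_{i\in V}x_i-\sum_{i\in N(j)\setminus V}x_i\le |V|-1$ (parity-check constraints). A constraint is a cut at a point if it is violated there. Adaptive LP decoding: Step 1: form an initial LP minimizing $\underline\gamma^T\underline x$ subject to, for each $i$, the single constraint $0\le x_i$ if $\gamma_i>0$, or $x_i\le 1$ if $\gamma_i<0$. Step 2: solve the current LP, obtaining an optimal solution $\underline x$. Step 3: find all parity-check constraints (over all check nodes $j$ and odd $V\subseteq N(j)$) that are cuts at $\underline x$. Step 4: if any cuts were found, add them to the current LP's constraints and return to Step 2; otherwise output $\underline x$ and stop. *)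

theory Defs
  imports Complex_Main
begin

text \<open>Parity-check matrix H of size m x n, given as a Boolean matrix:
  H j i is true iff H_{ji} = 1 (rows j < m, columns i < n).
  Vectors in R^n are functions nat => real, only coordinates i < n matter.\<close>

definition nbhd :: "nat \<Rightarrow> (nat \<Rightarrow> nat \<Rightarrow> bool) \<Rightarrow> nat \<Rightarrow> nat set" where
  "nbhd n H j = {i. i < n \<and> H j i}"

definition pc_constraints :: "nat \<Rightarrow> nat \<Rightarrow> (nat \<Rightarrow> nat \<Rightarrow> bool) \<Rightarrow> (nat \<times> nat set) set" where
  "pc_constraints m n H = {(j, V). j < m \<and> V \<subseteq> nbhd n H j \<and> odd (card V)}"

definition pc_sat :: "nat \<Rightarrow> (nat \<Rightarrow> nat \<Rightarrow> bool) \<Rightarrow> nat \<times> nat set \<Rightarrow> (nat \<Rightarrow> real) \<Rightarrow> bool" where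
  "pc_sat n H c x = (case c of (j, V) \<Rightarrow>
     (\<Sum>i\<in>V. x i) - (\<Sum>i\<in>nbhd n H j - V. x i) \<le> real (card V) - 1)"

definition fundamental_polytope :: "nat \<Rightarrow> nat \<Rightarrow> (nat \<Rightarrow> nat \<Rightarrow> bool) \<Rightarrow> (nat \<Rightarrow> real) set" where
  "fundamental_polytope m n H =
     {x. (\<forall>i<n. 0 \<le> x i \<and> x i \<le> 1) \<and> (\<forall>c\<in>pc_constraints m n H. pc_sat n H c x)}"

definition objective :: "nat \<Rightarrow> (nat \<Rightarrow> real) \<Rightarrow> (nat \<Rightarrow> real) \<Rightarrow> real" where
  "objective n \<gamma> x = (\<Sum>i<n. \<gamma> i * x i)"

definition is_optimal :: "(nat \<Rightarrow> real) set \<Rightarrow> ((nat \<Rightarrow> real) \<Rightarrow> real) \<Rightarrow> (nat \<Rightarrow> real) \<Rightarrow> bool" where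
  "is_optimal S f x = (x \<in> S \<and> (\<forall>y\<in>S. f x \<le> f y))"

definition init_sat :: "nat \<Rightarrow> (nat \<Rightarrow> real) \<Rightarrow> (nat \<Rightarrow> real) \<Rightarrow> bool" where
  "init_sat n \<gamma> x = (\<forall>i<n. (\<gamma> i > 0 \<longrightarrow> 0 \<le> x i) \<and> (\<gamma> i < 0 \<longrightarrow> x i \<le> 1))"

definition lp_feasible :: "nat \<Rightarrow> (nat \<Rightarrow> nat \<Rightarrow> bool) \<Rightarrow> (nat \<Rightarrow> real) \<Rightarrow> (nat \<times> nat set) set \<Rightarrow> (nat \<Rightarrow> real) set" where
  "lp_feasible n H \<gamma> C = {x. init_sat n \<gamma> x \<and> (\<forall>c\<in>C. pc_sat n H c x)}"

definition cuts :: "nat \<Rightarrow> nat \<Rightarrow> (nat \<Rightarrow> nat \<Rightarrow> bool) \<Rightarrow> (nat \<Rightarrow> real) \<Rightarrow> (nat \<times> nat set) set" where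
  "cuts m n H x = {c \<in> pc_constraints m n H. \<not> pc_sat n H c x}"

text \<open>A run of adaptive LP decoding up to iteration K: Cs k is the set of parity-check
  constraints in the LP at iteration k, xs k the optimal solution obtained in Step 2.
  In iterations k < K cuts were found and added; iteration K is the current one.\<close>
definition adaptive_run :: "nat \<Rightarrow> nat \<Rightarrow> (nat \<Rightarrow> nat \<Rightarrow> bool) \<Rightarrow> (nat \<Rightarrow> real) \<Rightarrow>
    (nat \<Rightarrow> (nat \<times> nat set) set) \<Rightarrow> (nat \<Rightarrow> nat \<Rightarrow> real) \<Rightarrow> nat \<Rightarrow> bool" where
  "adaptive_run m n H \<gamma> Cs xs K =
     (Cs 0 = {} \<and>
      (\<forall>k\<le>K. is_optimal (lp_feasible n H \<gamma> (Cs k)) (objective n \<gamma>) (xs k)) \<and>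
      (\<forall>k<K. cuts m n H (xs k) \<noteq> {} \<and> Cs (Suc k) = Cs k \<union> cuts m n H (xs k)))"

end

theory Submission
  imports Defs
begin

text \<open>The LP solved in the last iteration relaxes the fundamental polytope only in the box
  constraints \<open>0 \<le> x\<^sub>i \<le> 1\<close>, since every parity-check constraint it lacks is satisfied at
  its optimum \<open>x\<close>. Clipping \<open>x\<close> coordinatewise to \<open>[0, 1]\<close> keeps the satisfied parity-check
  constraints and the initial constraints, and strictly decreases the objective if some
  \<open>x\<^sub>i\<close> lies outside \<open>[0, 1]\<close> (this is where \<open>\<gamma>\<^sub>i \<noteq> 0\<close> is needed). Hence \<open>x\<close> lies in the
  fundamental polytope, which is contained in the feasible set of the LP, so \<open>x\<close> is optimal
  over it.\<close>

definition clip01 :: "real \<Rightarrow> real" where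
  "clip01 t = max 0 (min 1 t)"

lemma clip01_one_minus: "clip01 (1 - t) = 1 - clip01 t"
  by (simp add: clip01_def)

lemma sum_clip01_ge_one:
  assumes "finite A" and "1 \<le> (\<Sum>i\<in>A. a i)"
  shows "1 \<le> (\<Sum>i\<in>A. clip01 (a i))"
proof (cases "\<exists>i\<in>A. 1 \<le> a i")
  case True
  then obtain i where i: "i \<in> A" "1 \<le> a i" by blast
  have "1 = clip01 (a i)" using i by (simp add: clip01_def)
  also have "\<dots> \<le> (\<Sum>i\<in>A. clip01 (a i))"
    using i assms(1) by (intro member_le_sum) (auto simp: clip01_def)
  finally show ?thesis .
next
  case False
  then have "(\<Sum>i\<in>A. a i) \<le> (\<Sum>i\<in>A. clip01 (a i))"
    by (intro sum_mono) (auto simp: clip01_def)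
  then show ?thesis using assms(2) by linarith
qed

text \<open>In this form clipping \<open>x\<close> clips every summand, since \<open>1 - clip01 t = clip01 (1 - t)\<close>.\<close>

lemma parity_ineq_iff:
  fixes x :: "nat \<Rightarrow> real"
  assumes "finite N" and "V \<subseteq> N"
  shows "(\<Sum>i\<in>V. x i) - (\<Sum>i\<in>N - V. x i) \<le> real (card V) - 1 \<longleftrightarrow>
    1 \<le> (\<Sum>i\<in>N. if i \<in> V then 1 - x i else x i)"
proof -
  have "(\<Sum>i\<in>N. if i \<in> V then 1 - x i else x i) = (\<Sum>i\<in>V. 1 - x i) + (\<Sum>i\<in>N - V. x i)"
    using assms by (simp add: sum.If_cases Int_absorb1 Diff_eq)
  also have "\<dots> = real (card V) - (\<Sum>i\<in>V. x i) + (\<Sum>i\<in>N - V. x i)"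
    by (simp add: sum_subtractf)
  finally show ?thesis by linarith
qed

lemma pc_sat_clip01:
  assumes "c \<in> pc_constraints m n H" and "pc_sat n H c x"
  shows "pc_sat n H c (clip01 \<circ> x)"
proof -
  obtain j V where c: "c = (j, V)" and V: "V \<subseteq> nbhd n H j"
    using assms(1) by (auto simp: pc_constraints_def)
  have fin: "finite (nbhd n H j)" by (simp add: nbhd_def)
  have "1 \<le> (\<Sum>i\<in>nbhd n H j. if i \<in> V then 1 - x i else x i)"
    using assms(2) parity_ineq_iff[OF fin V] by (simp add: c pc_sat_def)
  then have "1 \<le> (\<Sum>i\<in>nbhd n H j. clip01 (if i \<in> V then 1 - x i else x i))"
    by (rule sum_clip01_ge_one[OF fin])
  then have "1 \<le> (\<Sum>i\<in>nbhd n H j. if i \<in> V then 1 - clip01 (x i) else clip01 (x i))"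
    by (simp only: if_distrib clip01_one_minus)
  then show ?thesis
    using parity_ineq_iff[OF fin V, of "clip01 \<circ> x"] by (simp add: c pc_sat_def cong: if_cong)
qed

lemma mult_clip01_le:
  fixes g t :: real
  assumes "0 < g \<longrightarrow> 0 \<le> t" and "g < 0 \<longrightarrow> t \<le> 1"
  shows "g * clip01 t \<le> g * t"
  using assms by (cases g "0::real" rule: linorder_cases)
    (auto simp: clip01_def intro: mult_left_mono mult_left_mono_neg)

lemma mult_clip01_less:
  fixes g t :: real
  assumes "0 < g \<longrightarrow> 0 \<le> t" and "g < 0 \<longrightarrow> t \<le> 1"
    and "g \<noteq> 0" and "\<not> (0 \<le> t \<and> t \<le> 1)"
  shows "g * clip01 t < g * t"
  using assms by (cases g "0::real" rule: linorder_cases) (auto simp: clip01_def mult_neg_neg)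

lemma objective_clip01_less:
  assumes "init_sat n \<gamma> x" and "\<forall>i<n. \<gamma> i \<noteq> 0"
    and "a < n" and "\<not> (0 \<le> x a \<and> x a \<le> 1)"
  shows "objective n \<gamma> (clip01 \<circ> x) < objective n \<gamma> x"
  unfolding objective_def
proof (rule sum_strict_mono_ex1)
  show "\<forall>i\<in>{..<n}. \<gamma> i * (clip01 \<circ> x) i \<le> \<gamma> i * x i"
    using assms(1) by (auto simp: init_sat_def intro: mult_clip01_le)
  show "\<exists>i\<in>{..<n}. \<gamma> i * (clip01 \<circ> x) i < \<gamma> i * x i"
    using assms by (auto simp: init_sat_def intro!: bexI[of _ a] mult_clip01_less)
qed simp

lemma adaptive_run_constraints_subset:
  assumes "adaptive_run m n H \<gamma> Cs xs K" and "k \<le> K"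
  shows "Cs k \<subseteq> pc_constraints m n H"
  using assms(2)
proof (induction k)
  case 0
  then show ?case using assms(1) by (simp add: adaptive_run_def)
next
  case (Suc k)
  then show ?case using assms(1) by (auto simp: adaptive_run_def cuts_def)
qed

lemma fundamental_polytope_subset_lp_feasible:
  assumes "C \<subseteq> pc_constraints m n H"
  shows "fundamental_polytope m n H \<subseteq> lp_feasible n H \<gamma> C"
  using assms by (auto simp: fundamental_polytope_def lp_feasible_def init_sat_def)

lemma lp_optimum_in_fundamental_polytope:
  assumes "\<forall>i<n. \<gamma> i \<noteq> 0" and "C \<subseteq> pc_constraints m n H"
    and opt: "is_optimal (lp_feasible n H \<gamma> C) (objective n \<gamma>) x"
    and pc: "\<forall>c\<in>pc_constraints m n H. pc_sat n H c x"
  shows "x \<in> fundamental_polytope m n H"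
proof -
  have init: "init_sat n \<gamma> x"
    using opt by (simp add: is_optimal_def lp_feasible_def)
  have "clip01 \<circ> x \<in> lp_feasible n H \<gamma> C"
    using assms(2) pc pc_sat_clip01 by (fastforce simp: lp_feasible_def init_sat_def clip01_def)
  then have no_descent: "objective n \<gamma> x \<le> objective n \<gamma> (clip01 \<circ> x)"
    using opt by (simp add: is_optimal_def)
  have "0 \<le> x i \<and> x i \<le> 1" if "i < n" for i
    using objective_clip01_less[OF init assms(1) that] no_descent by fastforce
  then show ?thesis using pc by (simp add: fundamental_polytope_def)
qed

lemma is_optimal_subset:
  assumes "is_optimal S f x" and "x \<in> T" and "T \<subseteq> S"
  shows "is_optimal T f x"
  using assms by (auto simp: is_optimal_def)

theorem lemma1:
  fixes m n :: nat and H :: "nat \<Rightarrow> nat \<Rightarrow> bool" and \<gamma> :: "nat \<Rightarrow> real"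
    and Cs :: "nat \<Rightarrow> (nat \<times> nat set) set" and xs :: "nat \<Rightarrow> nat \<Rightarrow> real" and K :: nat
  assumes "\<forall>i<n. \<gamma> i \<noteq> 0"
    and "adaptive_run m n H \<gamma> Cs xs K"
    and "cuts m n H (xs K) = {}"
  shows "is_optimal (fundamental_polytope m n H) (objective n \<gamma>) (xs K)"
proof -
  have C: "Cs K \<subseteq> pc_constraints m n H"
    using adaptive_run_constraints_subset[OF assms(2)] by simp
  have opt: "is_optimal (lp_feasible n H \<gamma> (Cs K)) (objective n \<gamma>) (xs K)"
    using assms(2) by (simp add: adaptive_run_def)
  have "\<forall>c\<in>pc_constraints m n H. pc_sat n H c (xs K)"
    using assms(3) by (auto simp: cuts_def)
  then have "xs K \<in> fundamental_polytope m n H"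
    using lp_optimum_in_fundamental_polytope[OF assms(1) C opt] by simp
  then show ?thesis
    using is_optimal_subset[OF opt] fundamental_polytope_subset_lp_feasible[OF C] by simp
qed

end
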